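(* Let $q$ be a prime power, $g,s\ge 1$ integers, and $V=\mathrm{GF}(q^g)^s$ regarded as a $gs$-dimensional vector space over $\mathrm{GF}(q)$. For every integer $k\ge 1$, the number $\#\mathcal{F}_k$ of fat $k$-dimensional $\mathrm{GF}(q)$-subspaces of $V$ is \[ \#\mathcal{F}_k=q^{(g-1)\binom{k}{2}}\prod_{i=0}^{k-1}\frac{q^{g(s-i)}-1}{q^{k-i}-1}. \]
   Context: A $\mathrm{GF}(q)$-subspace $U\le V$ is called fat if $\dim_{\mathrm{GF}(q^g)}\langle U\rangle_{\mathrm{GF}(q^g)}=\dim_{\mathrm{GF}(q)}U$, where $\langle U\rangle_{\mathrm{GF}(q^g)}$ is the $\mathrm{GF}(q^g)$-span of $U$; equivalently, some (and then every) $\mathrm{GF}(q)$-basis of $U$ is linearly independent over $\mathrm{GF}(q^g)$. $\mathcal{F}_k$ denotes the set of fat $k$-dimensional $\mathrm{GF}(q)$-subspaces of $V$. *)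

theory Defs
  imports "HOL-Analysis.Finite_Cartesian_Product"
begin

text \<open>Vectors of V = K^s are elements of type 'a^'n with CARD('n) = s, where the
  field K = GF(q^g) is a finite field type 'a and GF(q) is a subfield F of it.\<close>

definition smul_vec :: "'a::field \<Rightarrow> 'a^'n \<Rightarrow> 'a^'n" where
  "smul_vec c v = (\<chi> i. c * v $ i)"

text \<open>Span over the subfield F (F = UNIV gives the span over K).\<close>
definition span_over :: "'a::field set \<Rightarrow> ('a^'n) set \<Rightarrow> ('a^'n) set" where
  "span_over F B = {\<Sum>b\<in>B'. smul_vec (c b) b | B' c. finite B' \<and> B' \<subseteq> B \<and> c ` B' \<subseteq> F}"

definition indep_over :: "'a::field set \<Rightarrow> ('a^'n) set \<Rightarrow> bool" where
  "indep_over F B = (\<forall>B' c. finite B' \<and> B' \<subseteq> B \<and> c ` B' \<subseteq> F \<and>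
      (\<Sum>b\<in>B'. smul_vec (c b) b) = 0 \<longrightarrow> (\<forall>b\<in>B'. c b = 0))"

definition subspace_over :: "'a::field set \<Rightarrow> ('a^'n) set \<Rightarrow> bool" where
  "subspace_over F U = (0 \<in> U \<and> (\<forall>x\<in>U. \<forall>y\<in>U. x + y \<in> U) \<and> (\<forall>c\<in>F. \<forall>x\<in>U. smul_vec c x \<in> U))"

definition has_dim_over :: "'a::field set \<Rightarrow> ('a^'n) set \<Rightarrow> nat \<Rightarrow> bool" where
  "has_dim_over F U k = (\<exists>B. finite B \<and> card B = k \<and> B \<subseteq> U \<and> indep_over F B \<and> span_over F B = U)"

definition is_subfield :: "'a::field set \<Rightarrow> bool" where
  "is_subfield F = (0 \<in> F \<and> 1 \<in> F \<and> (\<forall>x\<in>F. \<forall>y\<in>F. x + y \<in> F \<and> x * y \<in> F) \<and>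
      (\<forall>x\<in>F. - x \<in> F \<and> inverse x \<in> F))"

definition fat_subspaces :: "'a::field set \<Rightarrow> nat \<Rightarrow> ('a^'n) set set" where
  "fat_subspaces F k = {U. subspace_over F U \<and> has_dim_over F U k \<and>
      has_dim_over UNIV (span_over UNIV U) k}"

end

theory Submission
  imports Defs
begin

text \<open>Count the ordered k-tuples of vectors of V that are independent over K = GF(q^g) in two
  ways. There are \<open>\<Prod>i<k. q^(gs) - q^(gi)\<close> of them, and the GF(q)-span of each is a fat
  k-space. Conversely, the tuples with GF(q)-span a given fat U are exactly the
  \<open>\<Prod>i<k. q^k - q^i\<close> ordered GF(q)-bases of U: such a basis spans the k-dimensional
  K-space \<open>\<langle>U\<rangle>\<close> over K, so by counting it is independent over K.\<close>

lemma smul_vec_simps: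
  "smul_vec 0 v = 0" "smul_vec 1 v = v" "smul_vec a 0 = 0"
  "smul_vec a (smul_vec b v) = smul_vec (a * b) v"
  "smul_vec (a + b) v = smul_vec a v + smul_vec b v"
  "smul_vec a (v + w) = smul_vec a v + smul_vec a w"
  "smul_vec a (- v) = - smul_vec a v" "smul_vec (- a) v = - smul_vec a v"
  "smul_vec (a - b) v = smul_vec a v - smul_vec b v"
  by (auto simp: smul_vec_def vec_eq_iff algebra_simps)

lemma smul_vec_sum: "smul_vec a (sum f B) = (\<Sum>b\<in>B. smul_vec a (f b))"
  by (induction B rule: infinite_finite_induct) (auto simp: smul_vec_simps)

lemma smul_vec_add_eq_0_solve:
  assumes "smul_vec a v + w = 0" "a \<noteq> 0"
  shows "v = smul_vec (- inverse a) w"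
proof -
  have "smul_vec a v = - w" using assms(1) by (simp add: eq_neg_iff_add_eq_0)
  then have "smul_vec (inverse a * a) v = smul_vec (inverse a) (- w)"
    by (simp add: smul_vec_simps(4)[symmetric])
  then show ?thesis using assms(2) by (simp add: smul_vec_def vec_eq_iff)
qed

lemma is_subfieldD:
  assumes "is_subfield F"
  shows "0 \<in> F" "1 \<in> F" "x \<in> F \<Longrightarrow> y \<in> F \<Longrightarrow> x + y \<in> F"
    "x \<in> F \<Longrightarrow> y \<in> F \<Longrightarrow> x * y \<in> F" "x \<in> F \<Longrightarrow> - x \<in> F"
    "x \<in> F \<Longrightarrow> inverse x \<in> F" "x \<in> F \<Longrightarrow> y \<in> F \<Longrightarrow> x - y \<in> F"
  using assms unfolding is_subfield_def by auto (metis diff_conv_add_uminus)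

lemma is_subfield_neg_inverse_mult:
  "is_subfield F \<Longrightarrow> a \<in> F \<Longrightarrow> b \<in> F \<Longrightarrow> - (inverse a * b) \<in> F"
  by (intro is_subfieldD(4,5,6))

lemma is_subfield_UNIV: "is_subfield UNIV"
  by (simp add: is_subfield_def)

lemma card_subfield_ge_2:
  assumes "is_subfield F" "finite F"
  shows "2 \<le> card F"
proof -
  have "{0, 1} \<subseteq> F" using is_subfieldD(1,2)[OF assms(1)] by simp
  then have "card {0::'a, 1} \<le> card F" using assms(2) by (rule card_mono[rotated])
  then show ?thesis by simp
qed

definition lincomb :: "('a::field^'n) set \<Rightarrow> ('a^'n \<Rightarrow> 'a) \<Rightarrow> 'a^'n" where
  "lincomb B c = (\<Sum>b\<in>B. smul_vec (c b) b)"

lemma lincomb_cong: "(\<And>b. b \<in> B \<Longrightarrow> c b = d b) \<Longrightarrow> lincomb B c = lincomb B d"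
  unfolding lincomb_def by simp

lemma lincomb_add: "lincomb B c + lincomb B d = lincomb B (\<lambda>b. c b + d b)"
  unfolding lincomb_def by (simp add: smul_vec_simps sum.distrib)

lemma lincomb_diff: "lincomb B c - lincomb B d = lincomb B (\<lambda>b. c b - d b)"
  unfolding lincomb_def by (simp add: smul_vec_simps sum_subtractf)

lemma lincomb_smul: "smul_vec a (lincomb B c) = lincomb B (\<lambda>b. a * c b)"
  unfolding lincomb_def by (simp add: smul_vec_simps smul_vec_sum)

lemma lincomb_insert:
  "finite B \<Longrightarrow> v \<notin> B \<Longrightarrow> lincomb (insert v B) c = smul_vec (c v) v + lincomb B c"
  unfolding lincomb_def by simp

lemma sum_subset_eq_lincomb:
  assumes "finite B" "B' \<subseteq> B"
  shows "(\<Sum>b\<in>B'. smul_vec (c b) b) = lincomb B (\<lambda>b. if b \<in> B' then c b else 0)"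
proof -
  have "(\<Sum>b\<in>B'. smul_vec (c b) b) = (\<Sum>b\<in>B'. smul_vec (if b \<in> B' then c b else 0) b)"
    by simp
  also have "\<dots> = lincomb B (\<lambda>b. if b \<in> B' then c b else 0)"
    unfolding lincomb_def using assms by (intro sum.mono_neutral_left) (auto simp: smul_vec_simps)
  finally show ?thesis .
qed

lemma span_over_lincomb:
  assumes F: "is_subfield F" and "finite B"
  shows "span_over F B = {lincomb B c | c. c ` B \<subseteq> F}"
proof
  show "span_over F B \<subseteq> {lincomb B c | c. c ` B \<subseteq> F}"
  proof
    fix x assume "x \<in> span_over F B"
    then obtain B' c where B': "B' \<subseteq> B" "c ` B' \<subseteq> F" "x = (\<Sum>b\<in>B'. smul_vec (c b) b)"
      unfolding span_over_def by blast
    define d where "d = (\<lambda>b. if b \<in> B' then c b else 0)"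
    have "x = lincomb B d"
      unfolding B'(3) d_def by (rule sum_subset_eq_lincomb[OF \<open>finite B\<close> B'(1)])
    moreover have "d ` B \<subseteq> F"
      using B'(2) is_subfieldD(1)[OF F] unfolding d_def by auto
    ultimately show "x \<in> {lincomb B c | c. c ` B \<subseteq> F}" by blast
  qed
  show "{lincomb B c | c. c ` B \<subseteq> F} \<subseteq> span_over F B"
    using \<open>finite B\<close> unfolding span_over_def lincomb_def by blast
qed

lemma indep_over_lincomb:
  assumes F: "is_subfield F" and "finite B"
  shows "indep_over F B \<longleftrightarrow> (\<forall>c. c ` B \<subseteq> F \<and> lincomb B c = 0 \<longrightarrow> (\<forall>b\<in>B. c b = 0))"
proof
  assume "indep_over F B"
  then show "\<forall>c. c ` B \<subseteq> F \<and> lincomb B c = 0 \<longrightarrow> (\<forall>b\<in>B. c b = 0)"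
    using \<open>finite B\<close> unfolding indep_over_def lincomb_def by blast
next
  assume indep: "\<forall>c. c ` B \<subseteq> F \<and> lincomb B c = 0 \<longrightarrow> (\<forall>b\<in>B. c b = 0)"
  show "indep_over F B" unfolding indep_over_def
  proof (intro allI impI ballI)
    fix B' c b assume "finite B' \<and> B' \<subseteq> B \<and> c ` B' \<subseteq> F \<and> (\<Sum>b\<in>B'. smul_vec (c b) b) = 0"
      and "b \<in> B'"
    then have B': "B' \<subseteq> B" "c ` B' \<subseteq> F" "(\<Sum>b\<in>B'. smul_vec (c b) b) = 0" by auto
    define d where "d = (\<lambda>b. if b \<in> B' then c b else 0)"
    have "lincomb B d = 0"
      using sum_subset_eq_lincomb[OF \<open>finite B\<close> B'(1), of c] B'(3) unfolding d_def by simp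
    moreover have "d ` B \<subseteq> F"
      using B'(2) is_subfieldD(1)[OF F] unfolding d_def by auto
    ultimately have "d b = 0" using indep \<open>b \<in> B'\<close> B'(1) by blast
    then show "c b = 0" using \<open>b \<in> B'\<close> by (simp add: d_def)
  qed
qed

lemma span_over_mono: "A \<subseteq> B \<Longrightarrow> span_over F A \<subseteq> span_over F B"
  unfolding span_over_def by (smt (verit) Collect_mono_iff order_trans)

lemma span_over_subfield_mono: "F \<subseteq> G \<Longrightarrow> span_over F A \<subseteq> span_over G A"
  unfolding span_over_def by (smt (verit) Collect_mono_iff order_trans)

lemma indep_over_mono: "indep_over F B \<Longrightarrow> A \<subseteq> B \<Longrightarrow> indep_over F A"
  unfolding indep_over_def by blast

lemma indep_over_subfield_mono: "F \<subseteq> G \<Longrightarrow> indep_over G B \<Longrightarrow> indep_over F B"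
  unfolding indep_over_def by (meson order_trans)

lemma span_over_superset:
  assumes "is_subfield F"
  shows "B \<subseteq> span_over F B"
proof
  fix v assume "v \<in> B"
  have "v = (\<Sum>b\<in>{v}. smul_vec ((\<lambda>_. 1) b) b)" by (simp add: smul_vec_simps)
  then show "v \<in> span_over F B"
    unfolding span_over_def mem_Collect_eq using \<open>v \<in> B\<close> is_subfieldD(2)[OF assms]
    by (intro exI[of _ "{v}"] exI[of _ "\<lambda>_. 1"] conjI) simp_all
qed

lemma subspace_over_sum:
  assumes "subspace_over F W" "\<And>b. b \<in> B \<Longrightarrow> f b \<in> W"
  shows "sum f B \<in> W"
  using assms(2)
  by (induction B rule: infinite_finite_induct) (use assms(1) in \<open>auto simp: subspace_over_def\<close>)

lemma span_over_least:
  assumes "subspace_over F W" "B \<subseteq> W"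
  shows "span_over F B \<subseteq> W"
proof
  fix x assume "x \<in> span_over F B"
  then obtain B' c where B': "B' \<subseteq> B" "c ` B' \<subseteq> F" "x = (\<Sum>b\<in>B'. smul_vec (c b) b)"
    unfolding span_over_def by blast
  show "x \<in> W" unfolding B'(3)
  proof (rule subspace_over_sum[OF assms(1)])
    fix b assume "b \<in> B'"
    then have "c b \<in> F" "b \<in> W" using B'(1,2) assms(2) by auto
    then show "smul_vec (c b) b \<in> W" using assms(1) unfolding subspace_over_def by blast
  qed
qed

lemma subspace_span_over:
  assumes F: "is_subfield F" and "finite B"
  shows "subspace_over F (span_over F B)"
  unfolding subspace_over_def span_over_lincomb[OF assms]
proof (intro conjI ballI)
  have "lincomb B (\<lambda>_. 0) = 0" by (simp add: lincomb_def smul_vec_simps)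
  then show "0 \<in> {lincomb B c | c. c ` B \<subseteq> F}"
    using is_subfieldD(1)[OF F] by (metis (mono_tags, lifting) image_subsetI mem_Collect_eq)
next
  fix x y assume "x \<in> {lincomb B c | c. c ` B \<subseteq> F}" "y \<in> {lincomb B c | c. c ` B \<subseteq> F}"
  then obtain c d where "x = lincomb B c" "y = lincomb B d" "c ` B \<subseteq> F" "d ` B \<subseteq> F" by blast
  then have "x + y = lincomb B (\<lambda>b. c b + d b)" "(\<lambda>b. c b + d b) ` B \<subseteq> F"
    using is_subfieldD(3)[OF F] by (auto simp: lincomb_add)
  then show "x + y \<in> {lincomb B c | c. c ` B \<subseteq> F}" by blast
next
  fix a x assume "a \<in> F" "x \<in> {lincomb B c | c. c ` B \<subseteq> F}"
  then obtain c where "x = lincomb B c" "c ` B \<subseteq> F" by blast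
  then have "smul_vec a x = lincomb B (\<lambda>b. a * c b)" "(\<lambda>b. a * c b) ` B \<subseteq> F"
    using is_subfieldD(4)[OF F] \<open>a \<in> F\<close> by (auto simp: lincomb_smul)
  then show "smul_vec a x \<in> {lincomb B c | c. c ` B \<subseteq> F}" by blast
qed

lemma span_over_UNIV_span_over:
  assumes "is_subfield F" "finite S"
  shows "span_over UNIV (span_over F S) = span_over UNIV S"
proof
  show "span_over UNIV S \<subseteq> span_over UNIV (span_over F S)"
    by (rule span_over_mono[OF span_over_superset[OF assms(1)]])
  show "span_over UNIV (span_over F S) \<subseteq> span_over UNIV S"
    by (intro span_over_least subspace_span_over is_subfield_UNIV assms(2) span_over_subfield_mono)
       simp
qed

lemma indep_over_insert_iff:
  assumes F: "is_subfield F" and "finite B" "v \<notin> B"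
  shows "indep_over F (insert v B) \<longleftrightarrow> indep_over F B \<and> v \<notin> span_over F B"
proof
  assume indep: "indep_over F (insert v B)"
  have "v \<notin> span_over F B"
  proof
    assume "v \<in> span_over F B"
    then obtain c where c: "c ` B \<subseteq> F" "v = lincomb B c"
      unfolding span_over_lincomb[OF F \<open>finite B\<close>] by blast
    define d where "d = c(v := -1)"
    have "lincomb B d = lincomb B c"
      using \<open>v \<notin> B\<close> by (intro lincomb_cong) (auto simp: d_def)
    then have "lincomb (insert v B) d = 0"
      using c(2) \<open>finite B\<close> \<open>v \<notin> B\<close> by (simp add: lincomb_insert d_def smul_vec_simps)
    moreover have "d ` insert v B \<subseteq> F"
      using c(1) \<open>v \<notin> B\<close> is_subfieldD(5)[OF F is_subfieldD(2)[OF F]] by (auto simp: d_def)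
    ultimately have "d v = 0"
      using indep unfolding indep_over_lincomb[OF F finite.insertI[OF \<open>finite B\<close>]] by blast
    then show False by (simp add: d_def)
  qed
  then show "indep_over F B \<and> v \<notin> span_over F B"
    using indep_over_mono[OF indep] by blast
next
  assume "indep_over F B \<and> v \<notin> span_over F B"
  then have indep: "indep_over F B" and v: "v \<notin> span_over F B" by auto
  show "indep_over F (insert v B)"
    unfolding indep_over_lincomb[OF F finite.insertI[OF \<open>finite B\<close>]]
  proof (intro allI impI)
    fix c assume c: "c ` insert v B \<subseteq> F \<and> lincomb (insert v B) c = 0"
    then have sum0: "smul_vec (c v) v + lincomb B c = 0"
      using \<open>finite B\<close> \<open>v \<notin> B\<close> by (simp add: lincomb_insert)
    have "c v = 0"
    proof (rule ccontr)
      assume "c v \<noteq> 0"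
      then have "v = lincomb B (\<lambda>b. - inverse (c v) * c b)"
        using smul_vec_add_eq_0_solve[OF sum0 \<open>c v \<noteq> 0\<close>] by (simp only: lincomb_smul)
      moreover have "(\<lambda>b. - inverse (c v) * c b) ` B \<subseteq> F"
        using c by (auto intro: is_subfield_neg_inverse_mult[OF F])
      ultimately have "v \<in> span_over F B"
        unfolding span_over_lincomb[OF F \<open>finite B\<close>] by blast
      then show False using v by simp
    qed
    then have "c ` B \<subseteq> F \<and> lincomb B c = 0" using c sum0 by (simp add: smul_vec_simps)
    then show "\<forall>b\<in>insert v B. c b = 0"
      using indep \<open>c v = 0\<close> unfolding indep_over_lincomb[OF F \<open>finite B\<close>] by blast
  qed
qed

lemma span_over_remove_if_dependent:
  assumes F: "is_subfield F" and "finite S" "\<not> indep_over F S"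
  obtains v where "v \<in> S" "span_over F (S - {v}) = span_over F S"
proof -
  obtain c v where c: "c ` S \<subseteq> F" "lincomb S c = 0" "v \<in> S" "c v \<noteq> 0"
    using assms(3) unfolding indep_over_lincomb[OF F \<open>finite S\<close>] by blast
  have "smul_vec (c v) v + lincomb (S - {v}) c = 0"
    using c(2,3) \<open>finite S\<close> lincomb_insert[of "S - {v}" v c] by (simp add: insert_absorb)
  then have "v = smul_vec (- inverse (c v)) (lincomb (S - {v}) c)"
    by (rule smul_vec_add_eq_0_solve[OF _ c(4)])
  then have "v = lincomb (S - {v}) (\<lambda>b. - inverse (c v) * c b)"
    by (simp only: lincomb_smul)
  moreover have "(\<lambda>b. - inverse (c v) * c b) ` (S - {v}) \<subseteq> F"
    using c(1,3) by (auto intro: is_subfield_neg_inverse_mult[OF F])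
  ultimately have "v \<in> span_over F (S - {v})"
    unfolding span_over_lincomb[OF F finite_Diff[OF \<open>finite S\<close>]] by blast
  then have "S \<subseteq> span_over F (S - {v})"
    using span_over_superset[OF F, of "S - {v}"] by blast
  then have "span_over F S \<subseteq> span_over F (S - {v})"
    by (intro span_over_least subspace_span_over F finite_Diff \<open>finite S\<close>)
  then show thesis
    using that[OF c(3)] span_over_mono[of "S - {v}" S F] by blast
qed

lemma span_over_eq_image_PiE:
  assumes F: "is_subfield F" and "finite B"
  shows "span_over F B = lincomb B ` (B \<rightarrow>\<^sub>E F)"
proof
  show "span_over F B \<subseteq> lincomb B ` (B \<rightarrow>\<^sub>E F)"
  proof
    fix x assume "x \<in> span_over F B"
    then obtain c where c: "c ` B \<subseteq> F" "x = lincomb B c"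
      unfolding span_over_lincomb[OF assms] by blast
    then have "restrict c B \<in> B \<rightarrow>\<^sub>E F" "x = lincomb B (restrict c B)"
      by (auto intro: lincomb_cong)
    then show "x \<in> lincomb B ` (B \<rightarrow>\<^sub>E F)" by blast
  qed
  show "lincomb B ` (B \<rightarrow>\<^sub>E F) \<subseteq> span_over F B"
    unfolding span_over_lincomb[OF assms] by (auto simp: PiE_def Pi_def)
qed

lemma inj_on_lincomb_PiE:
  assumes F: "is_subfield F" and "finite B" "indep_over F B"
  shows "inj_on (lincomb B) (B \<rightarrow>\<^sub>E F)"
proof (rule inj_onI)
  fix c d assume c: "c \<in> B \<rightarrow>\<^sub>E F" and d: "d \<in> B \<rightarrow>\<^sub>E F" and "lincomb B c = lincomb B d"
  then have "lincomb B (\<lambda>b. c b - d b) = 0" by (simp add: lincomb_diff[symmetric])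
  moreover have "(\<lambda>b. c b - d b) ` B \<subseteq> F"
    using c d by (auto simp: PiE_def Pi_def intro: is_subfieldD(7)[OF F])
  ultimately have "\<forall>b\<in>B. c b - d b = 0"
    using assms(3) unfolding indep_over_lincomb[OF F \<open>finite B\<close>] by blast
  then show "c = d" using c d by (intro PiE_ext) auto
qed

lemma card_span_over_le:
  assumes "is_subfield F" "finite F" "finite B"
  shows "card (span_over F B) \<le> card F ^ card B"
proof -
  have "card (span_over F B) \<le> card (B \<rightarrow>\<^sub>E F)"
    unfolding span_over_eq_image_PiE[OF assms(1,3)]
    by (rule card_image_le) (simp add: assms finite_PiE)
  then show ?thesis by (simp add: card_PiE assms(3))
qed

lemma card_span_over:
  assumes "is_subfield F" "finite B" "indep_over F B"
  shows "card (span_over F B) = card F ^ card B"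
  unfolding span_over_eq_image_PiE[OF assms(1,2)]
  by (simp add: card_image[OF inj_on_lincomb_PiE[OF assms]] card_PiE assms(2))

lemma indep_over_if_card_span_over_ge:
  assumes F: "is_subfield F" and "finite F" "finite B" "card F ^ card B \<le> card (span_over F B)"
  shows "indep_over F B"
proof (rule ccontr)
  assume "\<not> indep_over F B"
  then obtain v where v: "v \<in> B" "span_over F (B - {v}) = span_over F B"
    using span_over_remove_if_dependent[OF F \<open>finite B\<close>] by blast
  have "card F ^ card B \<le> card (span_over F (B - {v}))" using assms(4) v(2) by simp
  also have "\<dots> \<le> card F ^ card (B - {v})"
    by (rule card_span_over_le[OF F \<open>finite F\<close>]) (simp add: \<open>finite B\<close>)
  also have "\<dots> < card F ^ card B"
    using card_subfield_ge_2[OF F \<open>finite F\<close>] card_Diff1_less[OF \<open>finite B\<close> v(1)]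
    by (intro power_strict_increasing) auto
  finally show False by simp
qed

lemma card_if_has_dim_over:
  assumes "is_subfield F" "has_dim_over F U k"
  shows "card U = card F ^ k"
  using assms(2) card_span_over[OF assms(1)] unfolding has_dim_over_def by blast

lemma subspace_over_UNIV: "subspace_over F UNIV"
  unfolding subspace_over_def by simp

definition indep_lists :: "'a::field set \<Rightarrow> ('a^'n) set \<Rightarrow> nat \<Rightarrow> ('a^'n) list set" where
  "indep_lists F W m = {vs. length vs = m \<and> distinct vs \<and> set vs \<subseteq> W \<and> indep_over F (set vs)}"

lemma finite_indep_lists: "finite W \<Longrightarrow> finite (indep_lists F W m)"
  unfolding indep_lists_def by (rule finite_subset[OF _ finite_lists_length_eq[of W m]]) auto

lemma indep_lists_0: "indep_lists F W 0 = {[]}"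
  unfolding indep_lists_def indep_over_def by auto

lemma Cons_in_indep_lists_iff:
  assumes "is_subfield F"
  shows "v # vs \<in> indep_lists F W (Suc m) \<longleftrightarrow>
    vs \<in> indep_lists F W m \<and> v \<in> W - span_over F (set vs)"
proof (cases "v \<in> set vs")
  case True
  then show ?thesis using span_over_superset[OF assms, of "set vs"] by (auto simp: indep_lists_def)
next
  case False
  then show ?thesis using indep_over_insert_iff[OF assms finite_set False] by (auto simp: indep_lists_def)
qed

lemma indep_lists_Suc:
  assumes "is_subfield F"
  shows "indep_lists F W (Suc m) =
    (\<lambda>(vs, v). v # vs) ` (SIGMA vs:indep_lists F W m. W - span_over F (set vs))"
proof (intro equalityI subsetI)
  fix x assume x: "x \<in> indep_lists F W (Suc m)"
  then obtain v vs where x_eq: "x = v # vs" unfolding indep_lists_def by (cases x) auto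
  then have "(vs, v) \<in> (SIGMA vs:indep_lists F W m. W - span_over F (set vs))"
    using x unfolding x_eq Cons_in_indep_lists_iff[OF assms] by simp
  then show "x \<in> (\<lambda>(vs, v). v # vs) ` (SIGMA vs:indep_lists F W m. W - span_over F (set vs))"
    unfolding x_eq by (rule image_eqI[rotated]) simp
qed (auto simp: Cons_in_indep_lists_iff[OF assms])

lemma card_indep_lists:
  assumes F: "is_subfield F" and W: "subspace_over F W" "finite W"
  shows "card (indep_lists F W m) = (\<Prod>i<m. card W - card F ^ i)"
proof (induction m)
  case 0
  show ?case by (simp add: indep_lists_0)
next
  case (Suc m)
  have card_compl: "card (W - span_over F (set vs)) = card W - card F ^ m"
    if "vs \<in> indep_lists F W m" for vs
  proof -
    have vs: "length vs = m" "distinct vs" "set vs \<subseteq> W" "indep_over F (set vs)"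
      using that by (auto simp: indep_lists_def)
    have "span_over F (set vs) \<subseteq> W" by (rule span_over_least[OF W(1) vs(3)])
    moreover have "card (span_over F (set vs)) = card F ^ m"
      using card_span_over[OF F finite_set vs(4)] vs(1,2) by (simp add: distinct_card)
    ultimately show ?thesis using W(2) by (simp add: card_Diff_subset finite_subset)
  qed
  have "inj_on (\<lambda>(vs, v). v # vs) (SIGMA vs:indep_lists F W m. W - span_over F (set vs))"
    by (rule inj_onI) auto
  then have "card (indep_lists F W (Suc m)) =
      (\<Sum>vs\<in>indep_lists F W m. card (W - span_over F (set vs)))"
    by (simp add: indep_lists_Suc[OF F] card_image finite_indep_lists W(2))
  also have "\<dots> = card (indep_lists F W m) * (card W - card F ^ m)"
    by (simp add: card_compl)
  finally show ?case using Suc.IH by simp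
qed

lemma span_over_in_fat_subspaces:
  assumes F: "is_subfield F" and vs: "vs \<in> indep_lists UNIV UNIV k"
  shows "span_over F (set vs) \<in> fat_subspaces F k"
proof -
  have card: "card (set vs) = k" and indep: "indep_over UNIV (set vs)"
    using vs by (auto simp: indep_lists_def distinct_card)
  have "has_dim_over F (span_over F (set vs)) k"
    unfolding has_dim_over_def using card span_over_superset[OF F]
      indep_over_subfield_mono[OF subset_UNIV indep]
    by (intro exI[of _ "set vs"] conjI) simp_all
  moreover have "has_dim_over UNIV (span_over UNIV (span_over F (set vs))) k"
    unfolding has_dim_over_def span_over_UNIV_span_over[OF F finite_set]
    using card span_over_superset[OF is_subfield_UNIV] indep
    by (intro exI[of _ "set vs"] conjI) simp_all
  ultimately show ?thesis
    by (simp add: fat_subspaces_def subspace_span_over[OF F finite_set])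
qed

lemma indep_lists_fat_subspace:
  fixes U :: "('a::{finite,field}^'n) set"
  assumes F: "is_subfield F" and U: "U \<in> fat_subspaces F k"
  shows "indep_lists F U k = {vs \<in> indep_lists UNIV UNIV k. span_over F (set vs) = U}"
proof (intro equalityI subsetI)
  have sub: "subspace_over F U" and dim_F: "has_dim_over F U k"
    and dim_K: "has_dim_over UNIV (span_over UNIV U) k"
    using U by (auto simp: fat_subspaces_def)
  fix vs assume vs: "vs \<in> indep_lists F U k"
  then have card: "card (set vs) = k" and "set vs \<subseteq> U" and indep: "indep_over F (set vs)"
    by (auto simp: indep_lists_def distinct_card)
  have span_eq: "span_over F (set vs) = U"
  proof (rule card_subset_eq)
    show "span_over F (set vs) \<subseteq> U" by (rule span_over_least[OF sub \<open>set vs \<subseteq> U\<close>])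
    show "card (span_over F (set vs)) = card U"
      using card_span_over[OF F finite_set indep] card_if_has_dim_over[OF F dim_F] card by simp
  qed simp
  have "indep_over UNIV (set vs)"
  proof (rule indep_over_if_card_span_over_ge[OF is_subfield_UNIV finite_class.finite_UNIV finite_set])
    have "span_over UNIV (set vs) = span_over UNIV U"
      using span_over_UNIV_span_over[OF F finite_set, of vs] span_eq by simp
    then show "card (UNIV :: 'a set) ^ card (set vs) \<le> card (span_over UNIV (set vs))"
      using card_if_has_dim_over[OF is_subfield_UNIV dim_K] card by simp
  qed
  then show "vs \<in> {vs \<in> indep_lists UNIV UNIV k. span_over F (set vs) = U}"
    using vs span_eq by (simp add: indep_lists_def)
next
  fix vs assume "vs \<in> {vs \<in> indep_lists UNIV UNIV k. span_over F (set vs) = U}"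
  then show "vs \<in> indep_lists F U k"
    using span_over_superset[OF F, of "set vs"] indep_over_subfield_mono[OF subset_UNIV]
    by (auto simp: indep_lists_def)
qed

lemma card_fat_subspaces_mult:
  fixes F :: "'a::{finite,field} set"
  assumes F: "is_subfield F"
  shows "card (fat_subspaces F k :: ('a^'n::finite) set set) * (\<Prod>i<k. card F ^ k - card F ^ i) =
    (\<Prod>i<k. CARD('a) ^ CARD('n) - CARD('a) ^ i)"
proof -
  let ?T = "indep_lists UNIV (UNIV :: ('a^'n) set) k"
  let ?FS = "fat_subspaces F k :: ('a^'n) set set"
  have maps_to: "(\<lambda>vs. span_over F (set vs)) ` ?T \<subseteq> ?FS"
    using span_over_in_fat_subspaces[OF F] by blast
  have "card ?T = (\<Sum>U\<in>?FS. card {vs \<in> ?T. span_over F (set vs) = U})"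
    using sum.group[OF finite_indep_lists[OF finite] finite maps_to, of "\<lambda>_. 1::nat"] by simp
  also have "\<dots> = (\<Sum>U\<in>?FS. \<Prod>i<k. card F ^ k - card F ^ i)"
  proof (rule sum.cong[OF refl])
    fix U assume U: "U \<in> ?FS"
    then have sub: "subspace_over F U" and card: "card U = card F ^ k"
      using card_if_has_dim_over[OF F] by (auto simp: fat_subspaces_def)
    have "card {vs \<in> ?T. span_over F (set vs) = U} = card (indep_lists F U k)"
      by (simp add: indep_lists_fat_subspace[OF F U])
    also have "\<dots> = (\<Prod>i<k. card F ^ k - card F ^ i)"
      by (simp add: card_indep_lists[OF F sub finite] card)
    finally show "card {vs \<in> ?T. span_over F (set vs) = U} = (\<Prod>i<k. card F ^ k - card F ^ i)" .
  qed
  finally show ?thesis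
    using card_indep_lists[of UNIV "UNIV :: ('a^'n) set" k, OF is_subfield_UNIV subspace_over_UNIV finite]
    by (simp add: mult.commute)
qed

lemma sum_lessThan_eq_choose_2: "(\<Sum>i<k. i) = k choose 2"
  by (induction k) (simp_all add: numeral_2_eq_2)

lemma of_nat_prod_pow_diff:
  fixes q :: nat
  assumes "1 \<le> q" "k \<le> s"
  shows "real (\<Prod>i<k. q ^ s - q ^ i) = real q ^ (k choose 2) * (\<Prod>i<k. real q ^ (s - i) - 1)"
proof -
  have factor: "real (q ^ s - q ^ i) = real q ^ i * (real q ^ (s - i) - 1)" if "i < k" for i
  proof -
    have "q ^ i \<le> q ^ s" using that assms by (intro power_increasing) auto
    moreover have "real q ^ s = real q ^ i * real q ^ (s - i)"
      using that assms(2) by (simp add: power_add[symmetric])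
    ultimately show ?thesis by (simp add: of_nat_diff algebra_simps)
  qed
  have "real (\<Prod>i<k. q ^ s - q ^ i) = (\<Prod>i<k. real q ^ i * (real q ^ (s - i) - 1))"
    by (simp add: factor)
  also have "\<dots> = real q ^ (\<Sum>i<k. i) * (\<Prod>i<k. real q ^ (s - i) - 1)"
    by (simp add: prod.distrib power_sum)
  finally show ?thesis by (simp add: sum_lessThan_eq_choose_2)
qed

lemma real_eq_prod_quotient_if_mult_eq:
  fixes n q g s k :: nat
  assumes q: "2 \<le> q" and g: "1 \<le> g"
    and eq: "n * (\<Prod>i<k. q ^ k - q ^ i) = (\<Prod>i<k. (q ^ g) ^ s - (q ^ g) ^ i)"
  shows "real n = real q ^ ((g - 1) * (k choose 2)) *
    (\<Prod>i<k. (real q powi (int g * (int s - int i)) - 1) / (real q ^ (k - i) - 1))"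
proof -
  have denom_pos: "0 < real q ^ (k - i) - 1" if "i < k" for i
    using q that by simp
  show ?thesis
  proof (cases "k \<le> s")
    case True
    have powi: "real q powi (int g * (int s - int i)) = (real q ^ g) ^ (s - i)" if "i < k" for i
    proof -
      have "int g * (int s - int i) = int (g * (s - i))" using that True by simp
      then show ?thesis by (simp only: power_int_of_nat power_mult)
    qed
    have "real n * (real q ^ (k choose 2) * (\<Prod>i<k. real q ^ (k - i) - 1)) =
        real n * real (\<Prod>i<k. q ^ k - q ^ i)"
      using q by (simp add: of_nat_prod_pow_diff del: of_nat_prod)
    also have "\<dots> = real (\<Prod>i<k. (q ^ g) ^ s - (q ^ g) ^ i)"
      using arg_cong[OF eq, of real] by (simp del: of_nat_prod)
    also have "\<dots> = (real q ^ g) ^ (k choose 2) * (\<Prod>i<k. (real q ^ g) ^ (s - i) - 1)"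
      using q True by (subst of_nat_prod_pow_diff) simp_all
    also have "(real q ^ g) ^ (k choose 2) = real q ^ (k choose 2) * real q ^ ((g - 1) * (k choose 2))"
      using g by (simp add: power_mult[symmetric] power_add[symmetric] mult_eq_if)
    finally have "real n * (\<Prod>i<k. real q ^ (k - i) - 1) =
        real q ^ ((g - 1) * (k choose 2)) * (\<Prod>i<k. (real q ^ g) ^ (s - i) - 1)"
      using q by simp
    moreover have "(\<Prod>i<k. real q powi (int g * (int s - int i)) - 1) =
        (\<Prod>i<k. (real q ^ g) ^ (s - i) - 1)"
      by (rule prod.cong) (simp_all add: powi)
    moreover have "(\<Prod>i<k. real q ^ (k - i) - 1) \<noteq> 0"
      using denom_pos by (metis lessThan_iff less_irrefl prod_pos)
    ultimately show ?thesis
      by (simp add: prod_dividef field_simps)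
  next
    case False
    then have "(\<Prod>i<k. (q ^ g) ^ s - (q ^ g) ^ i) = 0"
      by (intro prod_zero bexI[of _ s]) auto
    moreover have "(\<Prod>i<k. q ^ k - q ^ i) \<noteq> 0"
      using q by auto
    ultimately have "n = 0" using eq by (metis mult_eq_0_iff)
    moreover have "(\<Prod>i<k. (real q powi (int g * (int s - int i)) - 1) / (real q ^ (k - i) - 1)) = 0"
      using False by (intro prod_zero bexI[of _ s]) auto
    ultimately show ?thesis by simp
  qed
qed

theorem lemma12:
  fixes F :: "'a::{finite,field} set" and q g k :: nat
  assumes "is_subfield F" and "card F = q" and "g \<ge> 1" and "CARD('a) = q ^ g" and "k \<ge> 1"
  shows "real (card (fat_subspaces F k :: ('a^'n::finite) set set)) =
    real q ^ ((g - 1) * (k choose 2)) *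
    (\<Prod>i<k. (real q powi (int g * (int CARD('n) - int i)) - 1) / (real q ^ (k - i) - 1))"
proof (rule real_eq_prod_quotient_if_mult_eq)
  show "2 \<le> q" using card_subfield_ge_2[OF assms(1) finite] assms(2) by simp
  show "card (fat_subspaces F k :: ('a^'n) set set) * (\<Prod>i<k. q ^ k - q ^ i) =
      (\<Prod>i<k. (q ^ g) ^ CARD('n) - (q ^ g) ^ i)"
    using card_fat_subspaces_mult[OF assms(1), of k] assms(2,4) by simp
qed (rule assms(3))

end
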